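(* For $\omega_T>0$ let $u^{*,\omega_T}$ be the optimal strategy of $$\max_{\text{admissible }u}\ \mathbb{E}(x_T)-\omega_T\mathrm{Var}(x_T)$$ given by $$u_t^{*,\omega_T}=-s_tK_t\,x_t+K_t\Big[x_0\prod_{k=0}^{T-1}s_k+\frac{1}{2\omega_T\prod_{k=0}^{T-1}(1-B_k)}\Big]\prod_{k=t+1}^{T-1}s_k^{-1}.$$ Write $\Pi=\prod_{k=0}^{T-1}(1-B_k)$. Then the terminal wealth $x_T$ under $u^{*,\omega_T}$ satisfies $$\mathrm{Var}(x_T)=\frac{\Pi}{1-\Pi}\Big(\mathbb{E}(x_T)-x_0\prod_{k=0}^{T-1}s_k\Big)^2,\qquad \mathbb{E}(x_T)>x_0\prod_{k=0}^{T-1}s_k .$$ Moreover, as $\omega_T$ ranges over $(0,\infty)$, the value $\mathbb{E}(x_T)$ ranges over all of $\big(x_0\prod_{k=0}^{T-1}s_k,\infty\big)$.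
   Context: Market model. Fix integers $T\ge1$ and $n\ge1$. For $t=0,\dots,T-1$ the following are given: - a deterministic riskless gross return $s_t>1$; - a random excess-return vector $P_t\in\mathbb{R}^n$. The vectors $P_0,\dots,P_{T-1}$ are independent and square integrable. Write $M_t=\mathbb{E}(P_tP_t')$ and $m_t=\mathbb{E}(P_t)$, and assume $M_t$ is positive definite. Set $$B_t=m_t'M_t^{-1}m_t,\qquad K_t=M_t^{-1}m_t,$$ and assume $0<B_t<1$ for all $t$. Wealth and strategies. The initial wealth $x_0\in\mathbb{R}$ is deterministic, and $x_{t+1}=s_tx_t+P_t'u_t$. A strategy is admissible if each $u_t\in\mathbb{R}^n$ is square integrable and $\sigma(P_0,\dots,P_{t-1})$-measurable. Conventions: an empty product equals $1$. *)

theory Defs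
  imports "HOL-Probability.Probability"
begin

definition second_moment :: "'a measure \<Rightarrow> ('a \<Rightarrow> real^'n) \<Rightarrow> real^'n^'n" where
  "second_moment M X = (\<chi> i j. integral\<^sup>L M (\<lambda>w. X w $ i * X w $ j))"

definition mean_vec :: "'a measure \<Rightarrow> ('a \<Rightarrow> real^'n) \<Rightarrow> real^'n" where
  "mean_vec M X = (\<chi> i. integral\<^sup>L M (\<lambda>w. X w $ i))"

definition Kvec :: "'a measure \<Rightarrow> ('a \<Rightarrow> real^'n) \<Rightarrow> real^'n" where
  "Kvec M X = matrix_inv (second_moment M X) *v mean_vec M X"

definition Bval :: "'a measure \<Rightarrow> ('a \<Rightarrow> real^'n) \<Rightarrow> real" where
  "Bval M X = mean_vec M X \<bullet> (matrix_inv (second_moment M X) *v mean_vec M X)"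

definition pos_def_mat :: "real^'n^'n \<Rightarrow> bool" where
  "pos_def_mat A \<longleftrightarrow> (\<forall>x. x \<noteq> 0 \<longrightarrow> 0 < x \<bullet> (A *v x))"

primrec wealth :: "(nat \<Rightarrow> real) \<Rightarrow> (nat \<Rightarrow> 'a \<Rightarrow> real^'n) \<Rightarrow> (nat \<Rightarrow> real \<Rightarrow> real^'n)
    \<Rightarrow> real \<Rightarrow> nat \<Rightarrow> 'a \<Rightarrow> real" where
  "wealth s P u x0 0 w = x0"
| "wealth s P u x0 (Suc t) w =
     s t * wealth s P u x0 t w + P t w \<bullet> u t (wealth s P u x0 t w)"

definition opt_strategy :: "'a measure \<Rightarrow> (nat \<Rightarrow> real) \<Rightarrow> (nat \<Rightarrow> 'a \<Rightarrow> real^'n)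
    \<Rightarrow> real \<Rightarrow> nat \<Rightarrow> real \<Rightarrow> nat \<Rightarrow> real \<Rightarrow> real^'n" where
  "opt_strategy M s P x0 T \<omega>T t x =
     (- (s t * x)) *\<^sub>R Kvec M (P t)
     + ((x0 * (\<Prod>k<T. s k) + 1 / (2 * \<omega>T * (\<Prod>k<T. 1 - Bval M (P k))))
         * (\<Prod>k\<in>{Suc t..<T}. inverse (s k))) *\<^sub>R Kvec M (P t)"

end

theory Submission imports Defs begin

text \<open>Under u^*, each step moves the wealth towards the discounted target
  g \<Prod>_{k>t} s_k^{-1}, where g = x_0 \<Prod>_k s_k + a and a = 1/(2 \<omega>_T \<Pi>): the gap to the
  target gets multiplied by s_t (1 - P_t' K_t).  Hence x_T = x_0 \<Prod>_k s_k + a (1 - Z) with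
  Z = \<Prod>_t (1 - P_t' K_t).  Each factor has first and second moment 1 - B_t, so by
  independence E Z = E Z^2 = \<Pi>.  Thus E x_T = x_0 \<Prod>_k s_k + a (1 - \<Pi>) and
  Var x_T = a^2 \<Pi> (1 - \<Pi>); eliminating a gives the variance formula, and a (1 - \<Pi>)
  sweeps out (0, \<infinity>) as \<omega>_T does.\<close>

lemma pos_def_mat_matrix_inv_right:
  fixes A :: "real^'n^'n"
  assumes "pos_def_mat A"
  shows "A *v (matrix_inv A *v v) = v"
proof -
  have "A *v x = 0 \<Longrightarrow> x = 0" for x
    using assms unfolding pos_def_mat_def by force
  then have "invertible A"
    using matrix_left_invertible_ker invertible_left_inverse by blast
  then have "A ** matrix_inv A = mat 1"
    unfolding matrix_inv_def invertible_def by (rule someI2_ex) blast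
  then show ?thesis by (simp add: matrix_vector_mul_assoc)
qed

lemma integrable_mult_of_square_integrable:
  fixes f g :: "'a \<Rightarrow> real"
  assumes "f \<in> borel_measurable M" "g \<in> borel_measurable M"
    and "integrable M (\<lambda>w. (f w)\<^sup>2)" "integrable M (\<lambda>w. (g w)\<^sup>2)"
  shows "integrable M (\<lambda>w. f w * g w)"
proof (rule Bochner_Integration.integrable_bound)
  show "integrable M (\<lambda>w. (f w)\<^sup>2 + (g w)\<^sup>2)" using assms by simp
  have "\<bar>a * b\<bar> \<le> a\<^sup>2 + b\<^sup>2" for a b :: real
  proof -
    have "2 * \<bar>a * b\<bar> \<le> a\<^sup>2 + b\<^sup>2"
      using sum_squares_bound[of "\<bar>a\<bar>" "\<bar>b\<bar>"] by (simp add: abs_mult mult.assoc)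
    then show ?thesis by linarith
  qed
  then show "AE w in M. norm (f w * g w) \<le> norm ((f w)\<^sup>2 + (g w)\<^sup>2)" by simp
qed (use assms in simp)

lemma
  fixes X :: "'a \<Rightarrow> real^'n"
  assumes "\<And>i. integrable M (\<lambda>w. X w $ i)"
  shows integrable_inner_const: "integrable M (\<lambda>w. X w \<bullet> c)"
    and integral_inner_const: "integral\<^sup>L M (\<lambda>w. X w \<bullet> c) = mean_vec M X \<bullet> c"
proof -
  have X_c: "X w \<bullet> c = (\<Sum>i\<in>UNIV. c $ i * X w $ i)" for w
    by (simp add: inner_vec_def mult.commute)
  show "integrable M (\<lambda>w. X w \<bullet> c)"
    unfolding X_c using assms by auto
  show "integral\<^sup>L M (\<lambda>w. X w \<bullet> c) = mean_vec M X \<bullet> c"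
    unfolding X_c using assms
    by (simp add: integral_sum mean_vec_def inner_vec_def mult.commute)
qed

lemma
  fixes X :: "'a \<Rightarrow> real^'n"
  assumes "\<And>i j. integrable M (\<lambda>w. X w $ i * X w $ j)"
  shows integrable_inner_const_square: "integrable M (\<lambda>w. (X w \<bullet> c)\<^sup>2)"
    and integral_inner_const_square:
      "integral\<^sup>L M (\<lambda>w. (X w \<bullet> c)\<^sup>2) = c \<bullet> (second_moment M X *v c)"
proof -
  have X_c: "(X w \<bullet> c)\<^sup>2 = (\<Sum>i\<in>UNIV. \<Sum>j\<in>UNIV. (c $ i * c $ j) * (X w $ i * X w $ j))" for w
    by (simp add: inner_vec_def power2_eq_square sum_product ac_simps)
  show "integrable M (\<lambda>w. (X w \<bullet> c)\<^sup>2)"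
    unfolding X_c using assms by auto
  have "integral\<^sup>L M (\<lambda>w. (X w \<bullet> c)\<^sup>2)
      = (\<Sum>i\<in>UNIV. \<Sum>j\<in>UNIV. (c $ i * c $ j) * second_moment M X $ i $ j)"
    unfolding X_c using assms by (simp add: integral_sum integrable_sum second_moment_def)
  also have "\<dots> = c \<bullet> (second_moment M X *v c)"
    by (simp add: inner_vec_def matrix_vector_mult_def sum_distrib_left ac_simps)
  finally show "integral\<^sup>L M (\<lambda>w. (X w \<bullet> c)\<^sup>2) = c \<bullet> (second_moment M X *v c)" .
qed

lemma (in prob_space)
  fixes X :: "'a \<Rightarrow> real^'n"
  assumes X_meas: "X \<in> borel_measurable M"
    and X_sq: "\<And>i. integrable M (\<lambda>w. (X w $ i)\<^sup>2)"
    and pd: "pos_def_mat (second_moment M X)"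
  shows integrable_one_minus_inner_Kvec: "integrable M (\<lambda>w. 1 - X w \<bullet> Kvec M X)"
    and expectation_one_minus_inner_Kvec: "expectation (\<lambda>w. 1 - X w \<bullet> Kvec M X) = 1 - Bval M X"
    and integrable_one_minus_inner_Kvec_square:
      "integrable M (\<lambda>w. (1 - X w \<bullet> Kvec M X)\<^sup>2)"
    and expectation_one_minus_inner_Kvec_square:
      "expectation (\<lambda>w. (1 - X w \<bullet> Kvec M X)\<^sup>2) = 1 - Bval M X"
proof -
  define K where "K = Kvec M X"
  have comp_meas: "(\<lambda>w. X w $ i) \<in> borel_measurable M" for i
    using measurable_compose[OF X_meas borel_measurable_nth] .
  have int1: "integrable M (\<lambda>w. X w $ i)" for i
    using square_integrable_imp_integrable[OF comp_meas X_sq] .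
  have int2: "integrable M (\<lambda>w. X w $ i * X w $ j)" for i j
    using integrable_mult_of_square_integrable[OF comp_meas comp_meas X_sq X_sq] .
  have E1: "expectation (\<lambda>w. X w \<bullet> K) = Bval M X"
    unfolding integral_inner_const[OF int1] K_def Bval_def Kvec_def ..
  have "K \<bullet> (second_moment M X *v K) = Bval M X"
    unfolding K_def Kvec_def Bval_def pos_def_mat_matrix_inv_right[OF pd] by (rule inner_commute)
  then have E2: "expectation (\<lambda>w. (X w \<bullet> K)\<^sup>2) = Bval M X"
    unfolding integral_inner_const_square[OF int2] .
  have square: "(1 - X w \<bullet> K)\<^sup>2 = 1 - 2 * (X w \<bullet> K) + (X w \<bullet> K)\<^sup>2" for w
    by (simp add: power2_eq_square algebra_simps)
  note int = integrable_inner_const[OF int1] integrable_inner_const_square[OF int2]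
  show "integrable M (\<lambda>w. 1 - X w \<bullet> Kvec M X)"
    using int unfolding K_def by simp
  show "expectation (\<lambda>w. 1 - X w \<bullet> Kvec M X) = 1 - Bval M X"
    using int E1 unfolding K_def by (simp add: prob_space)
  show "integrable M (\<lambda>w. (1 - X w \<bullet> Kvec M X)\<^sup>2)"
    using int unfolding K_def[symmetric] square by simp
  show "expectation (\<lambda>w. (1 - X w \<bullet> Kvec M X)\<^sup>2) = 1 - Bval M X"
    using int E1 E2 unfolding K_def[symmetric] square by (simp add: prob_space)
qed

lemma (in prob_space)
  fixes X :: "'i \<Rightarrow> 'a \<Rightarrow> real"
  assumes indep: "indep_vars (\<lambda>_. borel) X I" and "finite I"
    and sq: "\<And>i. i \<in> I \<Longrightarrow> integrable M (\<lambda>w. (X i w)\<^sup>2)"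
  shows indep_vars_integrable_prod_square: "integrable M (\<lambda>w. (\<Prod>i\<in>I. X i w)\<^sup>2)"
    and indep_vars_expectation_prod_square:
      "expectation (\<lambda>w. (\<Prod>i\<in>I. X i w)\<^sup>2) = (\<Prod>i\<in>I. expectation (\<lambda>w. (X i w)\<^sup>2))"
proof -
  have indep_sq: "indep_vars (\<lambda>_. borel) (\<lambda>i w. (X i w)\<^sup>2) I"
    by (rule indep_vars_compose2[OF indep, where Y="\<lambda>_ x. x\<^sup>2", simplified]) measurable
  show "integrable M (\<lambda>w. (\<Prod>i\<in>I. X i w)\<^sup>2)"
    unfolding prod_power_distrib
    using indep_vars_integrable[OF \<open>finite I\<close> indep_sq sq] by simp
  show "expectation (\<lambda>w. (\<Prod>i\<in>I. X i w)\<^sup>2) = (\<Prod>i\<in>I. expectation (\<lambda>w. (X i w)\<^sup>2))"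
    unfolding prod_power_distrib
    using indep_vars_lebesgue_integral[OF \<open>finite I\<close> indep_sq sq] by simp
qed

lemma (in prob_space)
  fixes P :: "'i \<Rightarrow> 'a \<Rightarrow> real^'n"
  assumes indep: "indep_vars (\<lambda>_. borel) P I" and "finite I"
    and meas: "\<And>t. t \<in> I \<Longrightarrow> P t \<in> borel_measurable M"
    and sq: "\<And>t i. t \<in> I \<Longrightarrow> integrable M (\<lambda>w. (P t w $ i)\<^sup>2)"
    and pd: "\<And>t. t \<in> I \<Longrightarrow> pos_def_mat (second_moment M (P t))"
  shows integrable_prod_one_minus_inner_Kvec:
      "integrable M (\<lambda>w. \<Prod>t\<in>I. 1 - P t w \<bullet> Kvec M (P t))"
    and expectation_prod_one_minus_inner_Kvec:
      "expectation (\<lambda>w. \<Prod>t\<in>I. 1 - P t w \<bullet> Kvec M (P t)) = (\<Prod>t\<in>I. 1 - Bval M (P t))"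
    and integrable_prod_one_minus_inner_Kvec_square:
      "integrable M (\<lambda>w. (\<Prod>t\<in>I. 1 - P t w \<bullet> Kvec M (P t))\<^sup>2)"
    and expectation_prod_one_minus_inner_Kvec_square:
      "expectation (\<lambda>w. (\<Prod>t\<in>I. 1 - P t w \<bullet> Kvec M (P t))\<^sup>2) = (\<Prod>t\<in>I. 1 - Bval M (P t))"
proof -
  have indep_factors: "indep_vars (\<lambda>_. borel) (\<lambda>t w. 1 - P t w \<bullet> Kvec M (P t)) I"
    by (rule indep_vars_compose2[OF indep, where Y = "\<lambda>t v. 1 - v \<bullet> Kvec M (P t)", simplified])
      measurable
  note moments = integrable_one_minus_inner_Kvec[OF meas sq pd]
    expectation_one_minus_inner_Kvec[OF meas sq pd]
    integrable_one_minus_inner_Kvec_square[OF meas sq pd]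
    expectation_one_minus_inner_Kvec_square[OF meas sq pd]
  show "integrable M (\<lambda>w. \<Prod>t\<in>I. 1 - P t w \<bullet> Kvec M (P t))"
    using indep_vars_integrable[OF \<open>finite I\<close> indep_factors] moments by simp
  show "expectation (\<lambda>w. \<Prod>t\<in>I. 1 - P t w \<bullet> Kvec M (P t)) = (\<Prod>t\<in>I. 1 - Bval M (P t))"
    using indep_vars_lebesgue_integral[OF \<open>finite I\<close> indep_factors] moments by simp
  show "integrable M (\<lambda>w. (\<Prod>t\<in>I. 1 - P t w \<bullet> Kvec M (P t))\<^sup>2)"
    using indep_vars_integrable_prod_square[OF indep_factors \<open>finite I\<close>] moments by simp
  show "expectation (\<lambda>w. (\<Prod>t\<in>I. 1 - P t w \<bullet> Kvec M (P t))\<^sup>2) = (\<Prod>t\<in>I. 1 - Bval M (P t))"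
    using indep_vars_expectation_prod_square[OF indep_factors \<open>finite I\<close>] moments by simp
qed

lemma (in prob_space) variance_affine_transform:
  fixes Z :: "'a \<Rightarrow> real"
  assumes "integrable M Z" "integrable M (\<lambda>w. (Z w)\<^sup>2)"
  shows "variance (\<lambda>w. b + a * Z w) = a\<^sup>2 * variance Z"
  using assms by (simp add: prob_space power2_eq_square algebra_simps)

lemma (in prob_space)
  fixes Z :: "'a \<Rightarrow> real"
  assumes Z: "integrable M Z" "integrable M (\<lambda>w. (Z w)\<^sup>2)"
    and moments: "expectation Z = q" "expectation (\<lambda>w. (Z w)\<^sup>2) = q"
  shows expectation_affine_equal_moments:
      "expectation (\<lambda>w. b + a * (1 - Z w)) = b + a * (1 - q)"
    and variance_affine_equal_moments: "q \<noteq> 1 \<Longrightarrow>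
      variance (\<lambda>w. b + a * (1 - Z w)) = q / (1 - q) * (expectation (\<lambda>w. b + a * (1 - Z w)) - b)\<^sup>2"
proof -
  show mean: "expectation (\<lambda>w. b + a * (1 - Z w)) = b + a * (1 - q)"
    using Z moments by (simp add: prob_space right_diff_distrib)
  assume "q \<noteq> 1"
  have "variance Z = q - q\<^sup>2"
    using variance_eq[OF Z] moments by simp
  have "(\<lambda>w. b + a * (1 - Z w)) = (\<lambda>w. (b + a) + (- a) * Z w)"
    by (simp add: fun_eq_iff right_diff_distrib)
  then have "variance (\<lambda>w. b + a * (1 - Z w)) = variance (\<lambda>w. (b + a) + (- a) * Z w)"
    by (rule arg_cong[where f = "\<lambda>X. variance X"])
  also have "\<dots> = (- a)\<^sup>2 * variance Z"
    by (rule variance_affine_transform[OF Z])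
  also have "\<dots> = a\<^sup>2 * (q - q\<^sup>2)"
    using \<open>variance Z = q - q\<^sup>2\<close> by simp
  also have "\<dots> = q / (1 - q) * (expectation (\<lambda>w. b + a * (1 - Z w)) - b)\<^sup>2"
    unfolding mean using \<open>q \<noteq> 1\<close> by (simp add: field_simps power2_eq_square)
  finally show "variance (\<lambda>w. b + a * (1 - Z w))
      = q / (1 - q) * (expectation (\<lambda>w. b + a * (1 - Z w)) - b)\<^sup>2" .
qed

lemma
  fixes b :: "'i \<Rightarrow> real"
  assumes "finite I" "I \<noteq> {}" and b: "\<And>i. i \<in> I \<Longrightarrow> 0 < b i \<and> b i < 1"
  shows prod_one_minus_pos: "0 < (\<Prod>i\<in>I. 1 - b i)"
    and prod_one_minus_less_one: "(\<Prod>i\<in>I. 1 - b i) < 1"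
proof -
  show "0 < (\<Prod>i\<in>I. 1 - b i)"
    using b by (force intro: prod_pos)
  obtain i where "i \<in> I" using \<open>I \<noteq> {}\<close> by blast
  then have "(\<Prod>i\<in>I. 1 - b i) < (\<Prod>i\<in>I. 1)"
    using \<open>finite I\<close> b by (intro prod_mono_strict[of i]) (auto simp: less_imp_le)
  then show "(\<Prod>i\<in>I. 1 - b i) < 1" by simp
qed

lemma wealth_tracking_strategy:
  fixes s :: "nat \<Rightarrow> real" and P :: "nat \<Rightarrow> 'a \<Rightarrow> real^'n" and K :: "nat \<Rightarrow> real^'n"
  assumes s_nz: "\<And>t. t < T \<Longrightarrow> s t \<noteq> 0" and "t \<le> T"
  shows "wealth s P (\<lambda>t x. (g * (\<Prod>k\<in>{Suc t..<T}. inverse (s k)) - s t * x) *\<^sub>R K t) x0 t w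
     = g / (\<Prod>k\<in>{t..<T}. s k) + (x0 - g / (\<Prod>k<T. s k)) * (\<Prod>k<t. s k * (1 - P k w \<bullet> K k))"
  using \<open>t \<le> T\<close>
proof (induction t)
  case 0
  then show ?case by (simp add: atLeast0LessThan)
next
  case (Suc t)
  define Q where "Q = (\<Prod>k\<in>{Suc t..<T}. s k)"
  define D where "D = x0 - g / (\<Prod>k<T. s k)"
  define R where "R = (\<Prod>k<t. s k * (1 - P k w \<bullet> K k))"
  define p where "p = P t w \<bullet> K t"
  define x where "x = wealth s P (\<lambda>t x. (g * (\<Prod>k\<in>{Suc t..<T}. inverse (s k)) - s t * x) *\<^sub>R K t) x0 t w"
  have "t < T" using Suc.prems by simp
  then have "s t \<noteq> 0" "Q \<noteq> 0" and Q_t: "(\<Prod>k\<in>{t..<T}. s k) = s t * Q"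
    using s_nz by (auto simp: Q_def prod.atLeast_Suc_lessThan)
  have IH: "x = g / (s t * Q) + D * R"
    using Suc by (simp add: x_def D_def R_def Q_t)
  have "(\<Prod>k\<in>{Suc t..<T}. inverse (s k)) = inverse Q"
    unfolding Q_def using prod_inversef[of s] by (simp add: comp_def)
  then have "wealth s P (\<lambda>t x. (g * (\<Prod>k\<in>{Suc t..<T}. inverse (s k)) - s t * x) *\<^sub>R K t) x0 (Suc t) w
      = s t * x + (g * inverse Q - s t * x) * p"
    by (simp add: x_def p_def)
  also have "\<dots> = g / Q + D * (R * (s t * (1 - p)))"
    unfolding IH using \<open>s t \<noteq> 0\<close> \<open>Q \<noteq> 0\<close> by (simp add: field_simps)
  finally show ?case by (simp add: Q_def D_def R_def p_def)
qed

lemma opt_strategy_tracks_target: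
  "opt_strategy M s P x0 T \<omega> = (\<lambda>t x.
     ((x0 * (\<Prod>k<T. s k) + 1 / (2 * \<omega> * (\<Prod>k<T. 1 - Bval M (P k))))
        * (\<Prod>k\<in>{Suc t..<T}. inverse (s k)) - s t * x) *\<^sub>R Kvec M (P t))"
  by (simp add: fun_eq_iff opt_strategy_def scaleR_left_diff_distrib)

lemma wealth_tracking_strategy_terminal:
  fixes s :: "nat \<Rightarrow> real" and P :: "nat \<Rightarrow> 'a \<Rightarrow> real^'n" and K :: "nat \<Rightarrow> real^'n"
  assumes s_nz: "\<And>t. t < T \<Longrightarrow> s t \<noteq> 0"
  shows "wealth s P (\<lambda>t x. (g * (\<Prod>k\<in>{Suc t..<T}. inverse (s k)) - s t * x) *\<^sub>R K t) x0 T w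
     = g + (x0 * (\<Prod>k<T. s k) - g) * (\<Prod>k<T. 1 - P k w \<bullet> K k)"
proof -
  define S where "S = (\<Prod>k<T. s k)"
  define Z where "Z = (\<Prod>k<T. 1 - P k w \<bullet> K k)"
  have "S \<noteq> 0" using s_nz by (simp add: S_def prod_zero_iff)
  have "wealth s P (\<lambda>t x. (g * (\<Prod>k\<in>{Suc t..<T}. inverse (s k)) - s t * x) *\<^sub>R K t) x0 T w
      = g + (x0 - g / S) * (S * Z)"
    by (subst wealth_tracking_strategy[where T = T])
      (use s_nz in \<open>simp_all add: S_def Z_def prod.distrib\<close>)
  also have "\<dots> = g + (x0 * S - g) * Z"
    using \<open>S \<noteq> 0\<close> by (simp add: field_simps)
  finally show ?thesis unfolding S_def Z_def .
qed

lemma wealth_opt_strategy_terminal: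
  fixes s :: "nat \<Rightarrow> real" and P :: "nat \<Rightarrow> 'a \<Rightarrow> real^'n"
  assumes "\<And>t. t < T \<Longrightarrow> s t \<noteq> 0"
  shows "wealth s P (opt_strategy M s P x0 T \<omega>) x0 T w
     = x0 * (\<Prod>k<T. s k) + 1 / (2 * \<omega> * (\<Prod>k<T. 1 - Bval M (P k)))
         * (1 - (\<Prod>k<T. 1 - P k w \<bullet> Kvec M (P k)))"
  unfolding opt_strategy_tracks_target
  by (subst wealth_tracking_strategy_terminal[where T = T])
    (use assms in \<open>simp_all add: right_diff_distrib\<close>)

lemma image_add_divide_greaterThan:
  fixes \<alpha> \<beta> :: real
  assumes "0 < \<alpha>"
  shows "(\<lambda>\<omega>. \<beta> + \<alpha> / \<omega>) ` {0<..} = {\<beta><..}"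
proof (intro set_eqI iffI)
  fix y assume "y \<in> {\<beta><..}"
  then have "\<alpha> / (y - \<beta>) \<in> {0<..}" "y = \<beta> + \<alpha> / (\<alpha> / (y - \<beta>))"
    using assms by auto
  then show "y \<in> (\<lambda>\<omega>. \<beta> + \<alpha> / \<omega>) ` {0<..}" by blast
qed (use assms in auto)

theorem mainTheorem3:
  fixes M :: "'a measure" and P :: "nat \<Rightarrow> 'a \<Rightarrow> real^'n"
    and s :: "nat \<Rightarrow> real" and x0 :: real and T :: nat
  assumes "prob_space M"
    and "T \<ge> 1"
    and "\<And>t. t < T \<Longrightarrow> s t > 1"
    and "\<And>t. t < T \<Longrightarrow> P t \<in> borel_measurable M"
    and "\<And>t i. t < T \<Longrightarrow> integrable M (\<lambda>w. (P t w $ i)\<^sup>2)"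
    and "prob_space.indep_vars M (\<lambda>_. borel) P {..<T}"
    and "\<And>t. t < T \<Longrightarrow> pos_def_mat (second_moment M (P t))"
    and "\<And>t. t < T \<Longrightarrow> 0 < Bval M (P t) \<and> Bval M (P t) < 1"
  shows "(\<forall>\<omega>T>0.
            let xT = wealth s P (opt_strategy M s P x0 T \<omega>T) x0 T;
                PiB = (\<Prod>k<T. 1 - Bval M (P k))
            in prob_space.variance M xT
                 = PiB / (1 - PiB) * (integral\<^sup>L M xT - x0 * (\<Prod>k<T. s k))\<^sup>2
               \<and> integral\<^sup>L M xT > x0 * (\<Prod>k<T. s k))
       \<and> (\<lambda>\<omega>T. integral\<^sup>L M (wealth s P (opt_strategy M s P x0 T \<omega>T) x0 T)) ` {0<..}
           = {x0 * (\<Prod>k<T. s k)<..}"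
proof -
  interpret prob_space M by (rule assms(1))
  define S where "S = (\<Prod>k<T. s k)"
  define PiB where "PiB = (\<Prod>k<T. 1 - Bval M (P k))"
  define Z where "Z = (\<lambda>w. \<Prod>k<T. 1 - P k w \<bullet> Kvec M (P k))"
  have PiB: "0 < PiB" "PiB < 1"
    unfolding PiB_def using assms(2,8)
    by (auto simp: lessThan_empty_iff intro!: prod_one_minus_pos prod_one_minus_less_one)
  have Z: "integrable M Z" "integrable M (\<lambda>w. (Z w)\<^sup>2)" "expectation Z = PiB"
      "expectation (\<lambda>w. (Z w)\<^sup>2) = PiB"
    using integrable_prod_one_minus_inner_Kvec[OF assms(6) finite_lessThan assms(4,5,7)]
      expectation_prod_one_minus_inner_Kvec[OF assms(6) finite_lessThan assms(4,5,7)]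
      integrable_prod_one_minus_inner_Kvec_square[OF assms(6) finite_lessThan assms(4,5,7)]
      expectation_prod_one_minus_inner_Kvec_square[OF assms(6) finite_lessThan assms(4,5,7)]
    unfolding Z_def PiB_def by simp_all
  have xT: "wealth s P (opt_strategy M s P x0 T \<omega>) x0 T
      = (\<lambda>w. x0 * S + 1 / (2 * \<omega> * PiB) * (1 - Z w))" for \<omega>
    unfolding S_def PiB_def Z_def fun_eq_iff
    by (intro allI, subst wealth_opt_strategy_terminal[where T = T]) (use assms(3) in \<open>force, simp\<close>)
  have mean: "expectation (wealth s P (opt_strategy M s P x0 T \<omega>) x0 T)
      = x0 * S + (1 - PiB) / (2 * PiB) / \<omega>" for \<omega>
    unfolding xT expectation_affine_equal_moments[OF Z] by simp
  show ?thesis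
    unfolding Let_def S_def[symmetric] PiB_def[symmetric] xT
  proof (intro conjI allI impI)
    show "variance (\<lambda>w. x0 * S + 1 / (2 * \<omega> * PiB) * (1 - Z w))
        = PiB / (1 - PiB) * (expectation (\<lambda>w. x0 * S + 1 / (2 * \<omega> * PiB) * (1 - Z w)) - x0 * S)\<^sup>2"
      for \<omega> by (rule variance_affine_equal_moments[OF Z]) (use PiB in simp)
    show "x0 * S < expectation (\<lambda>w. x0 * S + 1 / (2 * \<omega> * PiB) * (1 - Z w))" if "0 < \<omega>" for \<omega>
      using mean[of \<omega>] PiB that unfolding xT by simp
    show "(\<lambda>\<omega>. expectation (\<lambda>w. x0 * S + 1 / (2 * \<omega> * PiB) * (1 - Z w))) ` {0<..} = {x0 * S<..}"
      using mean image_add_divide_greaterThan[of "(1 - PiB) / (2 * PiB)" "x0 * S"] PiB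
      unfolding xT by simp
  qed
qed

end
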